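(* Let $d\ge1$, let $\mu_0:\mathbb{Z}^d\to[0,\infty)$ have finite support, and let $x_1,x_2,\ldots\in\mathbb{Z}^d$ be a sequence in which every $x\in\mathbb{Z}^d$ appears infinitely often. Define $\mu_k=T_{x_k}\cdots T_{x_1}\mu_0$ and $u_k(y)=\sum_{j\le k:\,x_j=y}\max(\mu_{j-1}(y)-1,0)$ (the total mass emitted from $y$ during the first $k$ topplings). Then as $k\to\infty$, $u_k\uparrow u$ pointwise for some finite function $u$, and $\mu_k\to\mu$ pointwise, where \[ \mu=\mu_0+\Delta u\le 1. \]
   Context: For a mass distribution $\mu:\mathbb{Z}^d\to[0,\infty)$ and $x\in\mathbb{Z}^d$, the toppling operator is $T_x\mu=\mu+\alpha\,\Delta\delta_x$ with $\alpha=\max(\mu(x)-1,0)$: if $\mu(x)>1$ the excess $\mu(x)-1$ is split equally among the $2d$ lattice neighbors of $x$ and $x$ keeps mass $1$. $\Delta f(x)=\frac1{2d}\sum_{y\sim x}f(y)-f(x)$ is the discrete Laplacian and $\delta_x$ the indicator of $\{x\}$. *)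

theory Defs
  imports "HOL-Analysis.Analysis"
begin

text \<open>The lattice Z^d is rendered as int ^ 'n, with d = CARD('n) (arbitrary, d \<ge> 1 automatically).\<close>

definition lattice_nbrs :: "int ^ 'n \<Rightarrow> (int ^ 'n) set" where
  "lattice_nbrs x = {y. (\<Sum>i\<in>UNIV. \<bar>y $ i - x $ i\<bar>) = 1}"

definition dlap :: "(int ^ 'n \<Rightarrow> real) \<Rightarrow> int ^ 'n \<Rightarrow> real" where
  "dlap f x = (1 / (2 * real CARD('n))) * (\<Sum>y\<in>lattice_nbrs x. f y) - f x"

definition topple :: "int ^ 'n \<Rightarrow> (int ^ 'n \<Rightarrow> real) \<Rightarrow> (int ^ 'n \<Rightarrow> real)" where
  "topple x \<mu> = (\<lambda>z. \<mu> z + max (\<mu> x - 1) 0 * dlap (\<lambda>w. if w = x then 1 else 0) z)"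

text \<open>mu_k = T_{x_k} ... T_{x_1} mu_0; the sequence is indexed from 1 (xs 0 is unused).\<close>
primrec topple_seq :: "(int ^ 'n \<Rightarrow> real) \<Rightarrow> (nat \<Rightarrow> int ^ 'n) \<Rightarrow> nat \<Rightarrow> (int ^ 'n \<Rightarrow> real)" where
  "topple_seq \<mu>0 xs 0 = \<mu>0"
| "topple_seq \<mu>0 xs (Suc k) = topple (xs (Suc k)) (topple_seq \<mu>0 xs k)"

definition odometer :: "(int ^ 'n \<Rightarrow> real) \<Rightarrow> (nat \<Rightarrow> int ^ 'n) \<Rightarrow> nat \<Rightarrow> int ^ 'n \<Rightarrow> real" where
  "odometer \<mu>0 xs k y =
     (\<Sum>j\<in>{j. 1 \<le> j \<and> j \<le> k \<and> xs j = y}. max (topple_seq \<mu>0 xs (j - 1) y - 1) 0)"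

end

theory Submission
  imports Defs
begin

(* The proof follows the classical odometer argument.
   (1) Mass identity: toppling x with excess a adds a * Delta(delta_x) to the mass and a to the
       odometer at x, so by induction mu_k = mu_0 + Delta u_k.
   (2) Least action principle: every w >= 0 with mu_0 + Delta w <= 1 dominates every u_k,
       since toppling at y can only raise u_k(y) up to the value forced by w.
   (3) Barrier: for finitely supported mu_0 such a w exists. It is separable,
       w(x) = sum_i g(x_i), where the one-dimensional profile g is built from a Huber
       function so that its second difference is 2 - 2E on a box containing the support of
       mu_0 (E bounding mu_0) and at most 2 everywhere; the Laplacian of w is the average of
       the second differences of g.
   Hence u_k increases to a finite limit u, mu_k -> mu_0 + Delta u pointwise, and since every site
   is toppled infinitely often (leaving mass <= 1 behind each time) the limit is <= 1.
   The argument does not use the nonnegativity of mu_0. *)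


section \<open>The lattice Laplacian\<close>

lemma dlap_linear: "dlap (\<lambda>z. f z + c * g z) x = dlap f x + c * dlap g x"
  unfolding dlap_def by (simp add: sum.distrib sum_distrib_left algebra_simps)

lemma lattice_nbrs_eq:
  "lattice_nbrs (x::int^'n) = range (\<lambda>i. x + axis i 1) \<union> range (\<lambda>i. x - axis i 1)"
proof
  have "\<bar>(x + axis i 1) $ j - x $ j\<bar> = (if j = i then 1 else 0)"
       "\<bar>(x - axis i 1) $ j - x $ j\<bar> = (if j = i then 1 else 0)" for i j
    by (simp_all add: axis_def)
  then have "(\<Sum>j\<in>UNIV. \<bar>(x + axis i 1) $ j - x $ j\<bar>) = 1"
       "(\<Sum>j\<in>UNIV. \<bar>(x - axis i 1) $ j - x $ j\<bar>) = 1" for i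
    by simp_all
  then show "range (\<lambda>i. x + axis i 1) \<union> range (\<lambda>i. x - axis i 1) \<subseteq> lattice_nbrs x"
    by (auto simp: lattice_nbrs_def)
next
  show "lattice_nbrs x \<subseteq> range (\<lambda>i. x + axis i 1) \<union> range (\<lambda>i. x - axis i 1)"
  proof
    fix y assume "y \<in> lattice_nbrs x"
    then have s: "(\<Sum>j\<in>UNIV. \<bar>y $ j - x $ j\<bar>) = 1" by (simp add: lattice_nbrs_def)
    have "\<exists>i. y $ i \<noteq> x $ i"
    proof (rule ccontr)
      assume "\<nexists>i. y $ i \<noteq> x $ i"
      then show False using s by simp
    qed
    then obtain i where i: "y $ i \<noteq> x $ i" by blast
    have "\<bar>y $ i - x $ i\<bar> \<le> 1"
      using s member_le_sum[of i UNIV "\<lambda>j. \<bar>y $ j - x $ j\<bar>"] by simp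
    with i have step: "\<bar>y $ i - x $ i\<bar> = 1" by linarith
    have "(\<Sum>j\<in>UNIV - {i}. \<bar>y $ j - x $ j\<bar>) = 0"
      using s step sum.remove[of UNIV i "\<lambda>j. \<bar>y $ j - x $ j\<bar>"] by simp
    then have "\<forall>j\<in>UNIV - {i}. \<bar>y $ j - x $ j\<bar> = 0"
      by (subst (asm) sum_nonneg_eq_0_iff) auto
    then have others: "y $ j = x $ j" if "j \<noteq> i" for j
      using that by auto
    from step consider "y $ i = x $ i + 1" | "y $ i = x $ i - 1" by linarith
    then show "y \<in> range (\<lambda>i. x + axis i 1) \<union> range (\<lambda>i. x - axis i 1)"
    proof cases
      case 1
      then have "y = x + axis i 1" using others by (auto simp: vec_eq_iff axis_def)
      then show ?thesis by blast
    next
      case 2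
      then have "y = x - axis i 1" using others by (auto simp: vec_eq_iff axis_def)
      then show ?thesis by blast
    qed
  qed
qed

lemma sum_lattice_nbrs:
  "(\<Sum>y\<in>lattice_nbrs (x::int^'n). f y) = (\<Sum>i\<in>UNIV. f (x + axis i 1)) + (\<Sum>i\<in>UNIV. f (x - axis i 1))"
proof -
  have inj_plus: "inj (\<lambda>i. x + axis i (1::int))" and inj_minus: "inj (\<lambda>i. x - axis i (1::int))"
    by (auto intro!: injI simp: axis_eq_axis)
  have "x + axis i 1 \<noteq> x - axis j (1::int)" for i j
  proof
    assume "x + axis i 1 = x - axis j (1::int)"
    then have "(x + axis i 1) $ i = (x - axis j 1) $ i" by simp
    then show False by (auto simp: axis_def split: if_splits)
  qed
  then have "range (\<lambda>i. x + axis i 1) \<inter> range (\<lambda>i. x - axis i 1) = {}"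
    by auto
  then show ?thesis
    unfolding lattice_nbrs_eq by (simp add: sum.union_disjoint sum.reindex inj_plus inj_minus)
qed

lemma dlap_indicator_self: "dlap (\<lambda>w. if w = x then 1 else 0) x = -1"
proof -
  have "x \<notin> lattice_nbrs x" by (simp add: lattice_nbrs_def)
  then have "(\<Sum>y\<in>lattice_nbrs x. (if y = x then 1 else 0::real)) = 0"
    by (intro sum.neutral) auto
  then show ?thesis by (simp add: dlap_def)
qed


section \<open>Toppling and the odometer\<close>

lemma topple_self: "topple x \<mu> x = min (\<mu> x) 1"
  by (simp add: topple_def dlap_indicator_self)

lemma odometer_Suc:
  "odometer \<mu>0 xs (Suc k) y = odometer \<mu>0 xs k y +
     (if xs (Suc k) = y then max (topple_seq \<mu>0 xs k y - 1) 0 else 0)"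
proof -
  let ?J = "\<lambda>k. {j. 1 \<le> j \<and> j \<le> k \<and> xs j = y}"
  have fin: "finite (?J k)" by (rule finite_subset[of _ "{..k}"]) auto
  show ?thesis
  proof (cases "xs (Suc k) = y")
    case True
    then have "?J (Suc k) = insert (Suc k) (?J k)" by auto
    then show ?thesis using True fin by (simp add: odometer_def)
  next
    case False
    then have "?J (Suc k) = ?J k" using le_Suc_eq by auto
    then show ?thesis using False by (simp add: odometer_def)
  qed
qed

lemma odometer_0: "odometer \<mu>0 xs 0 y = 0"
  by (simp add: odometer_def)

lemma odometer_mono: "mono (\<lambda>k. odometer \<mu>0 xs k y)"
  unfolding mono_iff_le_Suc by (simp add: odometer_Suc)

lemma topple_seq_odometer: "topple_seq \<mu>0 xs k = (\<lambda>y. \<mu>0 y + dlap (odometer \<mu>0 xs k) y)"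
proof (induction k)
  case 0
  show ?case by (simp add: odometer_0 dlap_def)
next
  case (Suc k)
  define x where "x = xs (Suc k)"
  define a where "a = max (topple_seq \<mu>0 xs k x - 1) 0"
  have increment: "odometer \<mu>0 xs (Suc k) = (\<lambda>y. odometer \<mu>0 xs k y + a * (if y = x then 1 else 0))"
    by (auto simp: odometer_Suc a_def x_def)
  show ?case
    unfolding increment dlap_linear
    by (rule ext) (simp add: topple_def Suc.IH a_def x_def algebra_simps)
qed

lemma topple_seq_toppled_site:
  assumes "k \<ge> 1" "xs k = x"
  shows "topple_seq \<mu>0 xs k x \<le> 1"
proof -
  obtain m where "k = Suc m" using assms(1) by (cases k) auto
  then show ?thesis using assms(2) by (simp add: topple_self)
qed

text \<open>When y topples, u_(k+1)(y) = mu_0(y) + (average of u_k over the neighbours) - 1, and the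
  same expression with w in place of u_k is at most w(y).\<close>
lemma least_action:
  assumes w_nonneg: "\<And>y. w y \<ge> 0" and w_stable: "\<And>y. \<mu>0 y + dlap w y \<le> 1"
  shows "odometer \<mu>0 xs k y \<le> w y"
proof (induction k arbitrary: y)
  case 0
  show ?case using w_nonneg by (simp add: odometer_0)
next
  case (Suc k)
  let ?c = "1 / (2 * real CARD('a))"
  show ?case
  proof (cases "xs (Suc k) = y \<and> topple_seq \<mu>0 xs k y > 1")
    case False
    then show ?thesis using Suc.IH[of y] by (auto simp: odometer_Suc)
  next
    case True
    have nbrs: "(\<Sum>z\<in>lattice_nbrs y. odometer \<mu>0 xs k z) \<le> (\<Sum>z\<in>lattice_nbrs y. w z)"
      by (intro sum_mono Suc.IH)
    have "odometer \<mu>0 xs (Suc k) y = odometer \<mu>0 xs k y + topple_seq \<mu>0 xs k y - 1"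
      using True by (simp add: odometer_Suc)
    also have "\<dots> = \<mu>0 y + ?c * (\<Sum>z\<in>lattice_nbrs y. odometer \<mu>0 xs k z) - 1"
      by (simp add: topple_seq_odometer dlap_def)
    also have "\<dots> \<le> \<mu>0 y + ?c * (\<Sum>z\<in>lattice_nbrs y. w z) - 1"
      using divide_right_mono[OF nbrs, of "2 * real CARD('a)"] by simp
    also have "\<dots> = (\<mu>0 y + dlap w y) + w y - 1"
      by (simp add: dlap_def)
    also have "\<dots> \<le> w y"
      using w_stable[of y] by simp
    finally show ?thesis .
  qed
qed


section \<open>A stabilizing barrier for finitely supported mass\<close>

definition second_diff :: "(int \<Rightarrow> real) \<Rightarrow> int \<Rightarrow> real" where
  "second_diff g t = g (t + 1) + g (t - 1) - 2 * g t"

lemma dlap_separable: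
  fixes g :: "int \<Rightarrow> real"
  shows "dlap (\<lambda>x::int^'n. \<Sum>j\<in>UNIV. g (x $ j)) x =
           (\<Sum>i\<in>UNIV. second_diff g (x $ i)) / (2 * real CARD('n))"
proof -
  let ?w = "\<lambda>x::int^'n. \<Sum>j\<in>UNIV. g (x $ j)"
  have shift: "?w (x + axis i c) = ?w x + g (x $ i + c) - g (x $ i)" for i c
  proof -
    have "?w (x + axis i c) - ?w x = (\<Sum>j\<in>UNIV. if j = i then g (x $ i + c) - g (x $ i) else 0)"
      by (subst sum_subtractf[symmetric], rule sum.cong) (auto simp: axis_def)
    then show ?thesis by simp
  qed
  have minus: "x - axis i 1 = x + axis i (-1)" for i
    by (simp add: axis_def vec_eq_iff)
  have "(\<Sum>y\<in>lattice_nbrs x. ?w y) = 2 * real CARD('n) * ?w x + (\<Sum>i\<in>UNIV. second_diff g (x $ i))"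
    unfolding sum_lattice_nbrs minus shift
    by (simp add: second_diff_def sum.distrib sum_subtractf algebra_simps sum_distrib_left[symmetric])
  then show ?thesis by (simp add: dlap_def field_simps)
qed

definition huber :: "int \<Rightarrow> int \<Rightarrow> real" where
  "huber r t = (if \<bar>t\<bar> \<le> r then (real_of_int t)^2 else 2 * r * \<bar>t\<bar> - (real_of_int r)^2)"

lemma second_diff_huber_nonneg:
  assumes "r \<ge> 1"
  shows "second_diff (huber r) t \<ge> 0"
proof -
  consider "t \<ge> r + 1" | "t = r" | "\<bar>t\<bar> < r" | "t = -r" | "t \<le> -r - 1" by linarith
  then show ?thesis
  proof cases
    case 1
    then have "\<not> \<bar>t\<bar> \<le> r" "\<not> \<bar>t + 1\<bar> \<le> r" "\<bar>t\<bar> = t" "\<bar>t + 1\<bar> = t + 1" "\<bar>t - 1\<bar> = t - 1"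
      using assms by auto
    then show ?thesis using 1 by (auto simp: second_diff_def huber_def power2_eq_square algebra_simps)
  next
    case 5
    then have "\<not> \<bar>t\<bar> \<le> r" "\<not> \<bar>t - 1\<bar> \<le> r" "\<bar>t\<bar> = -t" "\<bar>t - 1\<bar> = 1 - t" "\<bar>t + 1\<bar> = -t - 1"
      using assms by auto
    moreover have "0 \<le> (real_of_int r + real_of_int t + 1)^2" by simp
    ultimately show ?thesis using 5 by (auto simp: second_diff_def huber_def power2_eq_square algebra_simps)
  qed (use assms in \<open>auto simp: second_diff_def huber_def power2_eq_square algebra_simps\<close>)
qed

lemma second_diff_huber_inside:
  assumes "\<bar>t\<bar> < r"
  shows "second_diff (huber r) t = 2"
proof -
  have "\<bar>t\<bar> \<le> r" "\<bar>t + 1\<bar> \<le> r" "\<bar>t - 1\<bar> \<le> r" using assms by auto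
  then show ?thesis by (simp add: second_diff_def huber_def power2_eq_square algebra_simps)
qed

text \<open>The one-dimensional barrier profile: t^2 - E * huber r t, shifted up to be nonnegative.\<close>
definition barrier :: "real \<Rightarrow> int \<Rightarrow> int \<Rightarrow> real" where
  "barrier E r t = (real_of_int t)^2 - E * huber r t + E^2 * (real_of_int r)^2"

text \<open>Its second difference is at most 2 wherever huber is convex, and 2 - 2E inside the box.\<close>
lemma second_diff_barrier: "second_diff (barrier E r) t = 2 - E * second_diff (huber r) t"
  by (simp add: second_diff_def barrier_def power2_eq_square algebra_simps)

lemma barrier_nonneg:
  assumes "E \<ge> 1" "r \<ge> 0"
  shows "barrier E r t \<ge> 0"
proof (cases "\<bar>t\<bar> \<le> r")
  case True
  then have "(real_of_int t)^2 \<le> (real_of_int r)^2"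
    by (metis abs_le_square_iff abs_of_nonneg assms(2) of_int_abs of_int_le_iff)
  then have "(1 - E) * (real_of_int t)^2 \<ge> (1 - E) * (real_of_int r)^2"
    using assms(1) by (intro mult_left_mono_neg) auto
  moreover have "E^2 - E + 1 \<ge> 0" using assms(1) by (simp add: power2_eq_square)
  then have "(real_of_int r)^2 * (E^2 - E + 1) \<ge> 0" by simp
  ultimately show ?thesis using True by (simp add: barrier_def huber_def algebra_simps)
next
  case False
  then have "barrier E r t = (\<bar>real_of_int t\<bar> - E * r)^2 + E * (real_of_int r)^2"
    by (simp add: barrier_def huber_def power2_eq_square algebra_simps)
  then show ?thesis using assms by simp
qed

lemma stabilizing_barrier_exists:
  fixes \<mu>0 :: "int ^ 'n \<Rightarrow> real"
  assumes "finite {x. \<mu>0 x \<noteq> 0}"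
  shows "\<exists>w. (\<forall>y. w y \<ge> 0) \<and> (\<forall>y. \<mu>0 y + dlap w y \<le> 1)"
proof -
  let ?S = "{x. \<mu>0 x \<noteq> 0}"
  obtain B where B: "\<And>x i. x \<in> ?S \<Longrightarrow> \<bar>x $ i\<bar> \<le> B"
    using bdd_above_finite[of "(\<lambda>(x, i). \<bar>x $ i\<bar>) ` (?S \<times> UNIV)"] assms
    by (auto simp: bdd_above_def)
  obtain M where M: "\<And>x. x \<in> ?S \<Longrightarrow> \<mu>0 x \<le> M"
    using bdd_above_finite[of "\<mu>0 ` ?S"] assms by (auto simp: bdd_above_def)
  define r where "r = max B 0 + 1"
  define E where "E = max M 1"
  have r: "r \<ge> 1" and E: "E \<ge> 1" by (auto simp: r_def E_def)
  define w where "w = (\<lambda>x::int^'n. \<Sum>j\<in>UNIV. barrier E r (x $ j))"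
  have d: "real CARD('n) > 0" by simp
  have "\<mu>0 y + dlap w y \<le> 1" for y
  proof (cases "y \<in> ?S")
    case True
    have "\<bar>y $ i\<bar> < r" for i using B[OF True, of i] by (simp add: r_def)
    then have "(\<Sum>i\<in>UNIV. second_diff (barrier E r) (y $ i)) = (\<Sum>i\<in>(UNIV::'n set). 2 - 2 * E)"
      by (simp add: second_diff_barrier second_diff_huber_inside)
    then have "dlap w y = 1 - E" using d by (simp add: w_def dlap_separable field_simps)
    moreover have "\<mu>0 y \<le> E" using M[OF True] by (simp add: E_def)
    ultimately show ?thesis by simp
  next
    case False
    have "second_diff (barrier E r) t \<le> 2" for t
      using second_diff_huber_nonneg[OF r, of t] E by (simp add: second_diff_barrier)
    then have "(\<Sum>i\<in>UNIV. second_diff (barrier E r) (y $ i)) \<le> (\<Sum>i\<in>(UNIV::'n set). 2)"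
      by (intro sum_mono)
    then have "dlap w y \<le> 1" using d by (simp add: w_def dlap_separable field_simps)
    then show ?thesis using False by simp
  qed
  moreover have "w y \<ge> 0" for y
    unfolding w_def using barrier_nonneg[OF E] r by (simp add: sum_nonneg)
  ultimately show ?thesis by blast
qed


section \<open>Convergence\<close>

lemma limit_le_if_infinitely_often:
  fixes X :: "nat \<Rightarrow> real"
  assumes "X \<longlonglongrightarrow> L" and "infinite {k. X k \<le> c}"
  shows "L \<le> c"
proof (rule ccontr)
  assume "\<not> L \<le> c"
  then have "\<forall>\<^sub>F k in sequentially. \<not> X k \<le> c"
    using order_tendstoD(1)[OF assms(1)] by (simp add: not_le)
  moreover have "\<exists>\<^sub>F k in sequentially. X k \<le> c"
    using assms(2) by (simp add: frequently_cofinite flip: cofinite_eq_sequentially)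
  ultimately show False
    by (simp add: frequently_def)
qed

theorem lemma3p1:
  fixes \<mu>0 :: "int ^ 'n \<Rightarrow> real" and xs :: "nat \<Rightarrow> int ^ 'n"
  assumes "\<forall>x. \<mu>0 x \<ge> 0"
    and "finite {x. \<mu>0 x \<noteq> 0}"
    and "\<forall>x. infinite {k. k \<ge> 1 \<and> xs k = x}"
  shows "\<exists>u :: int ^ 'n \<Rightarrow> real.
           (\<forall>y. mono (\<lambda>k. odometer \<mu>0 xs k y) \<and> (\<lambda>k. odometer \<mu>0 xs k y) \<longlonglongrightarrow> u y)
         \<and> (\<forall>y. (\<lambda>k. topple_seq \<mu>0 xs k y) \<longlonglongrightarrow> \<mu>0 y + dlap u y)
         \<and> (\<forall>y. \<mu>0 y + dlap u y \<le> 1)"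
proof -
  obtain w where "\<forall>y. w y \<ge> 0" "\<forall>y. \<mu>0 y + dlap w y \<le> 1"
    using stabilizing_barrier_exists[OF assms(2)] by blast
  then have bounded: "odometer \<mu>0 xs k y \<le> w y" for k y
    by (intro least_action) auto
  define u where "u y = (SUP k. odometer \<mu>0 xs k y)" for y
  have odometer_lim: "(\<lambda>k. odometer \<mu>0 xs k y) \<longlonglongrightarrow> u y" for y
    unfolding u_def using bounded odometer_mono[of \<mu>0 xs y]
    by (intro LIMSEQ_incseq_SUP bdd_aboveI[of _ "w y"]) (auto simp: incseq_def mono_def)
  have mass_lim: "(\<lambda>k. topple_seq \<mu>0 xs k y) \<longlonglongrightarrow> \<mu>0 y + dlap u y" for y
    unfolding topple_seq_odometer dlap_def by (intro tendsto_intros odometer_lim)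
  have "\<mu>0 y + dlap u y \<le> 1" for y
  proof (rule limit_le_if_infinitely_often[OF mass_lim])
    have "{k. k \<ge> 1 \<and> xs k = y} \<subseteq> {k. topple_seq \<mu>0 xs k y \<le> 1}"
      using topple_seq_toppled_site by blast
    then show "infinite {k. topple_seq \<mu>0 xs k y \<le> 1}"
      using assms(3) finite_subset by blast
  qed
  then show ?thesis using odometer_mono odometer_lim mass_lim by blast
qed

end
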